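(* Let $A=\mathrm{diag}(\lambda_1,\dots,\lambda_k)$ with distinct real $\lambda_j$, $|\lambda_j|>1$, and let $\mathbf 1\in\mathbb R^k$ be the all-ones vector. Let $M$ be the unique solution of the Lyapunov equation $M=A^{-1}MA^{-T}+\mathbf 1\mathbf 1^T$. Then $M\succ0$ and $$\mathbf 1^TM^{-1}\mathbf 1=1-|\det A|^{-2}.$$ *)

theory Defs
  imports "HOL-Analysis.Analysis"
begin

definition diag_mat :: "real ^ 'n \<Rightarrow> real ^ 'n ^ 'n" where
  "diag_mat l = (\<chi> i j. if i = j then l $ i else 0)"

definition pos_def :: "real ^ 'n ^ 'n \<Rightarrow> bool" where
  "pos_def M \<longleftrightarrow> transpose M = M \<and> (\<forall>x. x \<noteq> 0 \<longrightarrow> x \<bullet> (M *v x) > 0)"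

definition ones_vec :: "real ^ 'n" where
  "ones_vec = (\<chi> i. 1)"

end

theory Submission
  imports Defs "HOL-Computational_Algebra.Polynomial"
begin

text \<open>
  Write \<open>a\<^sub>i = 1/\<lambda>\<^sub>i\<close>. The Lyapunov equation forces
  \<open>M\<^sub>i\<^sub>j = 1/(1 - a\<^sub>i a\<^sub>j) = \<Sum>\<^sub>k (a\<^sub>i a\<^sub>j)\<^sup>k\<close>, so
  \<open>x\<^sup>T M x = \<Sum>\<^sub>k (\<Sum>\<^sub>i x\<^sub>i a\<^sub>i\<^sup>k)\<^sup>2\<close>; this is positive for \<open>x \<noteq> 0\<close>
  because distinct nodes \<open>a\<^sub>i\<close> make the moments \<open>\<Sum>\<^sub>i x\<^sub>i a\<^sub>i\<^sup>k\<close> not all vanish.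
  For the identity, \<open>A\<^sup>-\<^sup>1 M A\<^sup>-\<^sup>T = M - \<one>\<one>\<^sup>T = M (I - M\<^sup>-\<^sup>1\<one> \<one>\<^sup>T)\<close>;
  taking determinants and applying the matrix determinant lemma gives
  \<open>det A\<^sup>-\<^sup>2 = 1 - \<one>\<^sup>T M\<^sup>-\<^sup>1 \<one>\<close>.
\<close>

lemma det_replace_row_mat_1:
  fixes v :: "'a::field ^ 'n"
  shows "det (\<chi> i. if i = k then v else row i (mat 1 :: 'a ^ 'n ^ 'n)) = v $ k"
proof -
  have "(\<Sum>i\<in>UNIV. v $ i *s row i (mat 1 :: 'a ^ 'n ^ 'n)) = v"
    by (simp add: vec_eq_iff row_def mat_def if_distrib cong: if_cong)
  from cramer_lemma_transpose[of k v "mat 1 :: 'a ^ 'n ^ 'n", unfolded this] show ?thesis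
    by simp
qed

lemma det_add_multiples_of_row:
  fixes A :: "'a::comm_ring_1 ^ 'n ^ 'n"
  assumes "k \<notin> S"
  shows "det (\<chi> i. if i \<in> S then row i A + c i *s row k A else row i A) = det A"
proof -
  have "finite S" by simp
  then show ?thesis using assms
  proof (induction S rule: finite_induct)
    case empty
    then show ?case by (simp add: row_def)
  next
    case (insert j S)
    define C where "C = (\<chi> i. if i \<in> S then row i A + c i *s row k A else row i A)"
    have "j \<noteq> k" and "k \<notin> S" using insert.prems by auto
    have "(\<chi> i. if i \<in> insert j S then row i A + c i *s row k A else row i A)
        = (\<chi> i. if i = j then row j C + c j *s row k C else row i C)"
      using insert.hyps \<open>k \<notin> S\<close> by (simp add: vec_eq_iff C_def row_def)
    then show ?case
      using det_row_operation[OF \<open>j \<noteq> k\<close>, of C] insert.IH[OF \<open>k \<notin> S\<close>]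
      by (simp add: C_def)
  qed
qed

lemma matrix_determinant_lemma:
  fixes u v :: "'a::field ^ 'n"
  shows "det (mat 1 + (\<chi> i j. u $ i * v $ j)) = 1 + (\<Sum>i\<in>UNIV. u $ i * v $ i)"
proof -
  let ?e = "\<lambda>i. row i (mat 1 :: 'a ^ 'n ^ 'n)"
  have "det (\<chi> i. if i \<in> S then ?e i + u $ i *s v else ?e i) = 1 + (\<Sum>i\<in>S. u $ i * v $ i)"
    for S
  proof -
    have "finite S" by simp
    then show ?thesis
    proof (induction S rule: finite_induct)
      case empty
      have "(\<chi> i. ?e i) = mat 1" by (simp add: row_def)
      then show ?case by simp
    next
      case (insert k S)
      define C where "C = (\<chi> i. if i \<in> S then ?e i + u $ i *s v else ?e i)"
      have row_k: "(\<chi> i. if i = k then ?e i else row i C) = C"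
        using insert.hyps by (simp add: vec_eq_iff C_def row_def)
      define B where "B = (\<chi> i. if i = k then v else ?e i)"
      have "det (\<chi> i. if i = k then v else row i C)
          = det (\<chi> i. if i \<in> S then row i B + u $ i *s row k B else row i B)"
        using insert.hyps by (intro arg_cong[where f = det]) (simp add: vec_eq_iff B_def C_def row_def)
      also have "\<dots> = det B"
        using insert.hyps(2) by (rule det_add_multiples_of_row)
      also have "\<dots> = v $ k"
        unfolding B_def by (rule det_replace_row_mat_1)
      finally have row_k_v: "det (\<chi> i. if i = k then v else row i C) = v $ k" .
      have "(\<chi> i. if i \<in> insert k S then ?e i + u $ i *s v else ?e i)
          = (\<chi> i. if i = k then ?e i + u $ i *s v else row i C)"
        by (simp add: vec_eq_iff C_def row_def)
      also have "det \<dots> = det C + det (\<chi> i. if i = k then u $ k *s v else row i C)"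
        unfolding det_row_add row_k by (simp cong: if_cong)
      also have "\<dots> = 1 + (\<Sum>i\<in>insert k S. u $ i * v $ i)"
        unfolding det_row_mul row_k_v using insert by (simp add: C_def)
      finally show ?case .
    qed
  qed
  from this[of UNIV] have "det (\<chi> i. ?e i + u $ i *s v) = 1 + (\<Sum>i\<in>UNIV. u $ i * v $ i)"
    by simp
  moreover have "mat 1 + (\<chi> i j. u $ i * v $ j) = (\<chi> i. ?e i + u $ i *s v)"
    by (simp add: vec_eq_iff row_def mat_def)
  ultimately show ?thesis
    by simp
qed

lemma matrix_inv_inverse:
  fixes A :: "'a::semiring_1 ^ 'n ^ 'n"
  assumes "invertible A"
  shows "A ** matrix_inv A = mat 1" and "matrix_inv A ** A = mat 1"
proof -
  have "A ** matrix_inv A = mat 1 \<and> matrix_inv A ** A = mat 1"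
    using assms unfolding invertible_def matrix_inv_def by (rule someI_ex)
  then show "A ** matrix_inv A = mat 1" and "matrix_inv A ** A = mat 1"
    by simp_all
qed

lemma matrix_inv_unique:
  fixes A B :: "'a::field ^ 'n ^ 'n"
  assumes "A ** B = mat 1"
  shows "matrix_inv A = B"
proof -
  have "invertible A"
    using assms invertible_right_inverse by blast
  have "matrix_inv A = matrix_inv A ** (A ** B)"
    using assms by simp
  also have "\<dots> = B"
    using matrix_inv_inverse(2)[OF \<open>invertible A\<close>] by (simp add: matrix_mul_assoc)
  finally show ?thesis .
qed

lemma pos_def_invertible:
  assumes "pos_def M"
  shows "invertible M"
proof -
  have "inj ((*v) M)"
  proof (rule injI)
    fix x y
    assume "M *v x = M *v y"
    then have "(x - y) \<bullet> (M *v (x - y)) = 0"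
      by (simp add: matrix_vector_mult_diff_distrib)
    then show "x = y"
      using assms unfolding pos_def_def by (metis less_irrefl right_minus_eq)
  qed
  then have "det M \<noteq> 0"
    using det_nz_iff_inj[of "(*v) M"] by simp
  then show ?thesis
    using invertible_det_nz by blast
qed

lemma diag_mat_mult_left: "diag_mat l ** N = (\<chi> i j. l $ i * N $ i $ j)"
  by (simp add: vec_eq_iff matrix_matrix_mult_def diag_mat_def if_distrib if_distribR cong: if_cong)

lemma diag_mat_mult_right: "N ** diag_mat l = (\<chi> i j. N $ i $ j * l $ j)"
  by (simp add: vec_eq_iff matrix_matrix_mult_def diag_mat_def if_distrib if_distribR cong: if_cong)

lemma transpose_diag_mat [simp]: "transpose (diag_mat l) = diag_mat l"
  by (simp add: vec_eq_iff transpose_def diag_mat_def)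

lemma det_diag_mat: "det (diag_mat l) = (\<Prod>i\<in>UNIV. l $ i)"
  by (simp add: det_diagonal diag_mat_def)

lemma matrix_inv_diag_mat:
  assumes "\<And>i. l $ i \<noteq> 0"
  shows "matrix_inv (diag_mat l) = diag_mat (\<chi> i. inverse (l $ i))"
  using assms
  by (intro matrix_inv_unique, unfold diag_mat_mult_right) (simp add: diag_mat_def mat_def vec_eq_iff)

lemma ex_power_sum_nonzero:
  fixes x :: "'a::field ^ 'n" and a :: "'n \<Rightarrow> 'a"
  assumes "inj a" and "x \<noteq> 0"
  shows "\<exists>k. (\<Sum>i\<in>UNIV. x $ i * a i ^ k) \<noteq> 0"
proof (rule ccontr)
  assume "\<not> ?thesis"
  then have moments_zero: "(\<Sum>i\<in>UNIV. x $ i * a i ^ k) = 0" for k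
    by simp
  obtain i0 where "x $ i0 \<noteq> 0"
    using \<open>x \<noteq> 0\<close> by (auto simp: vec_eq_iff)
  \<comment> \<open>\<open>p\<close> vanishes at every node but \<open>a i0\<close>, and pairing \<open>x\<close> with its values is a combination of moments.\<close>
  define p where "p = (\<Prod>j\<in>UNIV - {i0}. [:- a j, 1:])"
  have poly_p: "poly p z = (\<Prod>j\<in>UNIV - {i0}. z - a j)" for z
    by (simp add: p_def poly_prod)
  have "(\<Sum>i\<in>UNIV. x $ i * poly p (a i))
      = x $ i0 * poly p (a i0) + (\<Sum>i\<in>UNIV - {i0}. x $ i * poly p (a i))"
    by (rule sum.remove) auto
  also have "(\<Sum>i\<in>UNIV - {i0}. x $ i * poly p (a i)) = 0"
    by (rule sum.neutral) (auto simp: poly_p)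
  also have "x $ i0 * poly p (a i0) + 0 \<noteq> 0"
    using \<open>x $ i0 \<noteq> 0\<close> \<open>inj a\<close> by (auto simp: poly_p inj_eq)
  finally have "(\<Sum>i\<in>UNIV. x $ i * poly p (a i)) \<noteq> 0" .
  moreover have "(\<Sum>i\<in>UNIV. x $ i * poly p (a i))
      = (\<Sum>k\<le>degree p. coeff p k * (\<Sum>i\<in>UNIV. x $ i * a i ^ k))"
    by (simp add: poly_altdef sum_distrib_left algebra_simps sum.swap[of _ UNIV])
  ultimately show False
    by (simp add: moments_zero)
qed

lemma sums_square_power_sum:
  fixes x :: "real ^ 'n" and a :: "'n \<Rightarrow> real"
  assumes "\<And>i. \<bar>a i\<bar> < 1"
  shows "(\<lambda>k. (\<Sum>i\<in>UNIV. x $ i * a i ^ k)\<^sup>2)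
           sums (\<Sum>i\<in>UNIV. \<Sum>j\<in>UNIV. x $ i * x $ j / (1 - a i * a j))"
proof -
  have "(\<lambda>k. x $ i * x $ j * (a i * a j) ^ k) sums (x $ i * x $ j / (1 - a i * a j))" for i j
  proof -
    have "norm (a i * a j) < 1"
      using abs_mult_less[OF assms[of i] assms[of j]] by (simp add: abs_mult)
    from sums_mult[OF geometric_sums[OF this], of "x $ i * x $ j"] show ?thesis
      by simp
  qed
  then have "(\<lambda>k. \<Sum>i\<in>UNIV. \<Sum>j\<in>UNIV. x $ i * x $ j * (a i * a j) ^ k)
      sums (\<Sum>i\<in>UNIV. \<Sum>j\<in>UNIV. x $ i * x $ j / (1 - a i * a j))"
    by (intro sums_sum)
  moreover have "(\<Sum>i\<in>UNIV. \<Sum>j\<in>UNIV. x $ i * x $ j * (a i * a j) ^ k)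
      = (\<Sum>i\<in>UNIV. x $ i * a i ^ k)\<^sup>2" for k
    by (simp add: power2_eq_square sum_product power_mult_distrib algebra_simps)
  ultimately show ?thesis
    by simp
qed

lemma cauchy_kernel_quadratic_form_pos:
  fixes x :: "real ^ 'n" and a :: "'n \<Rightarrow> real"
  assumes "inj a" and "\<And>i. \<bar>a i\<bar> < 1" and "x \<noteq> 0"
  shows "(\<Sum>i\<in>UNIV. \<Sum>j\<in>UNIV. x $ i * x $ j / (1 - a i * a j)) > 0"
proof -
  note sums = sums_square_power_sum[of a x, OF assms(2)]
  obtain k where "(\<Sum>i\<in>UNIV. x $ i * a i ^ k) \<noteq> 0"
    using ex_power_sum_nonzero[OF assms(1,3)] by blast
  then show ?thesis
    using suminf_pos2[OF sums_summable[OF sums], of k] sums_unique[OF sums] by simp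
qed

lemma diagonal_lyapunov_solution:
  assumes "\<And>i j. a $ i * a $ j \<noteq> 1"
    and "M = diag_mat a ** M ** transpose (diag_mat a) + (\<chi> i j. 1)"
  shows "M = (\<chi> i j. 1 / (1 - a $ i * a $ j))"
proof -
  have "M $ i $ j = a $ i * M $ i $ j * a $ j + 1" for i j
    using arg_cong[OF assms(2), of "\<lambda>N. N $ i $ j"]
    by (simp add: diag_mat_mult_left diag_mat_mult_right)
  then have "M $ i $ j * (1 - a $ i * a $ j) = 1" for i j
    by (simp add: algebra_simps)
  then show ?thesis
    using assms(1) by (simp add: vec_eq_iff field_simps)
qed

lemma lyapunov_ones_quadratic_form:
  fixes B M :: "real ^ 'n ^ 'n"
  assumes "invertible M" and "M = B ** M ** transpose B + (\<chi> i j. 1)"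
  shows "ones_vec \<bullet> (matrix_inv M *v ones_vec) = 1 - (det B)\<^sup>2"
proof -
  define w where "w = matrix_inv M *v ones_vec"
  have "M *v w = ones_vec"
    using matrix_inv_inverse(1)[OF assms(1)] by (simp add: w_def matrix_vector_mul_assoc)
  then have "(M *v w) $ i = 1" for i
    by (simp add: ones_vec_def)
  then have "(\<Sum>k\<in>UNIV. M $ i $ k * w $ k) = 1" for i
    by (simp add: matrix_vector_mult_def)
  then have rank_one: "M ** (\<chi> i j. (- w) $ i * ones_vec $ j) = - (\<chi> i j. 1)"
    by (simp add: vec_eq_iff matrix_matrix_mult_def ones_vec_def sum_negf)
  have "B ** M ** transpose B = M - (\<chi> i j. 1)"
    using assms(2) by (simp add: algebra_simps)
  also have "\<dots> = M ** (mat 1 + (\<chi> i j. (- w) $ i * ones_vec $ j))"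
    unfolding matrix_add_ldistrib rank_one by simp
  finally have "det (B ** M ** transpose B) = det (M ** (mat 1 + (\<chi> i j. (- w) $ i * ones_vec $ j)))"
    by simp
  then have "det B * det M * det B = det M * (1 - w \<bullet> ones_vec)"
    using matrix_determinant_lemma[of "- w" ones_vec]
    by (simp add: det_mul det_transpose inner_vec_def sum_negf)
  then have "det M * (1 - (det B)\<^sup>2 - w \<bullet> ones_vec) = 0"
    by (simp add: power2_eq_square algebra_simps)
  moreover have "det M \<noteq> 0"
    using assms(1) invertible_det_nz by blast
  ultimately show ?thesis
    by (simp add: w_def inner_commute)
qed

lemma pos_def_diagonal_lyapunov_solution:
  assumes "inj (\<lambda>i. a $ i)" and small: "\<And>i. \<bar>a $ i\<bar> < 1"
    and "M = diag_mat a ** M ** transpose (diag_mat a) + (\<chi> i j. 1)"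
  shows "pos_def M"
proof -
  have "a $ i * a $ j \<noteq> 1" for i j
    using abs_mult_less[OF small[of i] small[of j]] by (auto simp flip: abs_mult)
  then have M_eq: "M = (\<chi> i j. 1 / (1 - a $ i * a $ j))"
    using assms(3) by (rule diagonal_lyapunov_solution)
  have "x \<bullet> (M *v x) > 0" if "x \<noteq> 0" for x
    using cauchy_kernel_quadratic_form_pos[OF assms(1) small that]
    by (simp add: M_eq inner_vec_def matrix_vector_mult_def sum_distrib_left algebra_simps)
  moreover have "transpose M = M"
    by (simp add: M_eq vec_eq_iff transpose_def mult.commute)
  ultimately show ?thesis
    by (simp add: pos_def_def)
qed

theorem mainTheorem5:
  fixes lam :: "real ^ 'n" and M :: "real ^ 'n ^ 'n"
  assumes distinct: "inj (\<lambda>i. lam $ i)"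
    and big: "\<And>i. \<bar>lam $ i\<bar> > 1"
    and lyap: "M = matrix_inv (diag_mat lam) ** M ** transpose (matrix_inv (diag_mat lam))
                   + (\<chi> i j. 1)"
  shows "pos_def M \<and>
         ones_vec \<bullet> (matrix_inv M *v ones_vec) = 1 - 1 / \<bar>det (diag_mat lam)\<bar> ^ 2"
proof -
  define a where "a = (\<chi> i. inverse (lam $ i))"
  have "lam $ i \<noteq> 0" for i
    using big[of i] by auto
  then have "matrix_inv (diag_mat lam) = diag_mat a"
    unfolding a_def by (rule matrix_inv_diag_mat)
  then have lyap_a: "M = diag_mat a ** M ** transpose (diag_mat a) + (\<chi> i j. 1)"
    using lyap by simp
  have "\<bar>a $ i\<bar> < 1" for i
    using big[of i] by (simp add: a_def abs_inverse inverse_less_1_iff)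
  moreover have "inj (\<lambda>i. a $ i)"
    using distinct by (simp add: inj_def a_def)
  ultimately have "pos_def M"
    using lyap_a by (intro pos_def_diagonal_lyapunov_solution)
  moreover have "det (diag_mat a) = inverse (det (diag_mat lam))"
    using prod_inversef[of "\<lambda>i. lam $ i" UNIV] by (simp add: det_diag_mat a_def comp_def)
  ultimately show ?thesis
    using lyapunov_ones_quadratic_form[OF pos_def_invertible lyap_a]
    by (simp add: power_inverse divide_inverse)
qed

end
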